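(* Let $n\ge1$ and $1\le k\le n$. For every $g\in\mathrm{Sp}(2n,\mathbb R)$ one has $p_k(g^{-1})=(-1)^k p_k(g)$.
   Context: $J:\mathbb R^{2n}\to\mathbb R^{2n}$ is the linear map with $Je_i=(-1)^ie_{2n-i+1}$ on the standard basis $e_1,\dots,e_{2n}$, and $\mathrm{Sp}(2n,\mathbb R)=\{g\in\mathrm{GL}(2n,\mathbb R):g^TJg=J\}$. The antiprincipal $k\times k$ minor $p_k(g)$ of a $2n\times 2n$ matrix $g$ is defined by $ge_{2n}\wedge ge_{2n-1}\wedge\cdots\wedge ge_{2n-k+1}\wedge e_{k+1}\wedge\cdots\wedge e_{2n}=p_k(g)\,e_1\wedge\cdots\wedge e_{2n}$; equivalently $p_k(g)=\det\big(g[\{1,\dots,k\},\{2n,2n-1,\dots,2n-k+1\}]\big)$, the determinant of the submatrix with rows $1,\dots,k$ and columns $2n,\dots,2n-k+1$ in that order. *)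

theory Defs
  imports "Jordan_Normal_Form.Determinant"
begin

text \<open>Matrices are 0-indexed: basis vector e_i (1-indexed) is index i-1.
  J e_i = (-1)^i e_{2n-i+1}, so column c (0-indexed) of J has entry (-1)^(c+1)
  in row 2n-1-c.\<close>
definition Jmat :: "nat \<Rightarrow> real mat" where
  "Jmat n = mat (2*n) (2*n) (\<lambda>(r,c). if r + c = 2*n - 1 then (-1)^(c+1) else 0)"

definition Sp :: "nat \<Rightarrow> real mat set" where
  "Sp n = {g. g \<in> carrier_mat (2*n) (2*n) \<and> invertible_mat g \<and>
              transpose_mat g * Jmat n * g = Jmat n}"

text \<open>Antiprincipal k x k minor: rows 1..k, columns 2n, 2n-1, ..., 2n-k+1 (in that order);
  0-indexed rows 0..k-1 and columns 2n-1-j for j = 0..k-1.\<close>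
definition antiminor :: "nat \<Rightarrow> nat \<Rightarrow> real mat \<Rightarrow> real" where
  "antiminor n k g = det (mat k k (\<lambda>(i,j). g $$ (i, 2*n - 1 - j)))"

end

theory Submission
  imports Defs
begin

text \<open>From \<open>g\<^sup>T J g = J\<close> one gets \<open>g\<^sup>-\<^sup>1 = J\<^sup>-\<^sup>1 g\<^sup>T J\<close>; as \<open>J\<close> is a signed
  antidiagonal permutation matrix, \<open>g\<^sup>-\<^sup>1\<close> is, up to the checkerboard signs \<open>(-1)\<^sup>r\<^sup>+\<^sup>c\<close>,
  the transpose of \<open>g\<close> reflected in the antidiagonal. Under this reflection the antiprincipal
  \<open>k \<times> k\<close> block of \<open>g\<^sup>-\<^sup>1\<close> becomes the transpose of that of \<open>g\<close> with all entries multiplied by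
  \<open>-(-1)\<^sup>i\<^sup>+\<^sup>j\<close>. Conjugating by \<open>diag((-1)\<^sup>i)\<close> removes the checkerboard signs without changing
  the determinant, and the remaining factor \<open>-1\<close> contributes \<open>(-1)\<^sup>k\<close>.\<close>

lemma Jmat_carrier [simp]: "Jmat n \<in> carrier_mat (2*n) (2*n)"
  by (simp add: Jmat_def)

lemma Jmat_mult_index:
  assumes "A \<in> carrier_mat (2*n) m" and "r < 2*n" and "c < m"
  shows "(Jmat n * A) $$ (r, c) = (-1)^(2*n - r) * A $$ (2*n - 1 - r, c)"
proof -
  have "(Jmat n * A) $$ (r, c) = (\<Sum>l\<in>{0..<2*n}. Jmat n $$ (r, l) * A $$ (l, c))"
    using assms by (simp add: Jmat_def scalar_prod_def)
  also have "\<dots> = (\<Sum>l\<in>{0..<2*n}. if l = 2*n - 1 - r then (-1)^(2*n - r) * A $$ (l, c) else 0)"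
    using assms(2) by (intro sum.cong refl) (auto simp: Jmat_def Suc_diff_Suc)
  finally show ?thesis
    using assms(2) by (simp add: sum.delta)
qed

lemma mult_Jmat_index:
  assumes "A \<in> carrier_mat m (2*n)" and "r < m" and "c < 2*n"
  shows "(A * Jmat n) $$ (r, c) = A $$ (r, 2*n - 1 - c) * (-1)^(c + 1)"
proof -
  have "(A * Jmat n) $$ (r, c) = (\<Sum>l\<in>{0..<2*n}. A $$ (r, l) * Jmat n $$ (l, c))"
    using assms by (simp add: Jmat_def scalar_prod_def)
  also have "\<dots> = (\<Sum>l\<in>{0..<2*n}. if l = 2*n - 1 - c then A $$ (r, l) * (-1)^(c + 1) else 0)"
    using assms(3) by (intro sum.cong refl) (auto simp: Jmat_def)
  finally show ?thesis
    using assms(3) by (simp add: sum.delta)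
qed

lemma Sp_transpose_mult_Jmat:
  assumes g: "g \<in> Sp n" and h: "h \<in> carrier_mat (2*n) (2*n)" and hg: "h * g = 1\<^sub>m (2*n)"
  shows "transpose_mat g * Jmat n = Jmat n * h"
proof -
  have gc: "g \<in> carrier_mat (2*n) (2*n)" and sympl: "transpose_mat g * Jmat n * g = Jmat n"
    using g by (auto simp: Sp_def)
  have gh: "g * h = 1\<^sub>m (2*n)"
    using mat_mult_left_right_inverse[OF h gc hg] .
  have "transpose_mat g * Jmat n = transpose_mat g * Jmat n * (g * h)"
    using gc by (simp add: gh right_mult_one_mat[of _ "2*n" "2*n"])
  also have "\<dots> = (transpose_mat g * Jmat n * g) * h"
    by (rule assoc_mult_mat[symmetric, of _ "2*n" "2*n" _ "2*n" _ "2*n"]) (use gc h in auto)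
  finally show ?thesis
    by (simp add: sympl)
qed

lemma Sp_inverse_index:
  assumes g: "g \<in> Sp n" and h: "h \<in> carrier_mat (2*n) (2*n)" and hg: "h * g = 1\<^sub>m (2*n)"
    and r: "r < 2*n" and c: "c < 2*n"
  shows "h $$ (r, c) = (-1)^(r + c) * g $$ (2*n - 1 - c, 2*n - 1 - r)"
proof -
  let ?r = "2*n - 1 - r"
  have gc: "g \<in> carrier_mat (2*n) (2*n)"
    using g by (simp add: Sp_def)
  have "(-1)^(r + 1) * h $$ (r, c) = (Jmat n * h) $$ (?r, c)"
    using Jmat_mult_index[OF h _ c, of ?r] r by (simp add: Suc_diff_Suc)
  also have "\<dots> = (transpose_mat g * Jmat n) $$ (?r, c)"
    by (simp add: Sp_transpose_mult_Jmat[OF g h hg])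
  also have "\<dots> = g $$ (2*n - 1 - c, ?r) * (-1)^(c + 1)"
    using mult_Jmat_index[of "transpose_mat g" "2*n" n ?r c] gc r c by simp
  finally have "(-1)^(r + 1) * h $$ (r, c) = g $$ (2*n - 1 - c, ?r) * (-1)^(c + 1)" .
  then have "(-1)^(r + 1) * ((-1)^(r + 1) * h $$ (r, c))
      = (-1)^(r + 1) * (g $$ (2*n - 1 - c, ?r) * (-1)^(c + 1))"
    by simp
  then show ?thesis
    by (simp add: power_add)
qed

lemma det_checkerboard:
  fixes A :: "'a :: comm_ring_1 mat"
  assumes A: "A \<in> carrier_mat k k"
  shows "det (mat k k (\<lambda>(i, j). (-1)^(i + j) * A $$ (i, j))) = det A"
proof -
  define D :: "'a mat" where "D = mat_diag k (\<lambda>i. (-1)^i)"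
  have D: "D \<in> carrier_mat k k"
    by (simp add: D_def)
  have "D * A * D = mat k k (\<lambda>(i, j). (-1)^i * A $$ (i, j)) * D"
    using A by (simp add: D_def mat_diag_mult_left)
  also have "\<dots> = mat k k (\<lambda>(i, j). (-1)^(i + j) * A $$ (i, j))"
    unfolding D_def by (subst mat_diag_mult_right[of _ k]) (auto simp: power_add)
  finally have "det (mat k k (\<lambda>(i, j). (-1)^(i + j) * A $$ (i, j))) = det (D * A * D)"
    by simp
  also have "\<dots> = (det D * det D) * det A"
    using A D by (simp add: det_mult[of _ k])
  also have "det D * det D = 1"
  proof -
    have "D * D = 1\<^sub>m k"
      by (simp add: D_def power_add[symmetric] flip: power_mult_distrib)
    then show ?thesis
      using det_mult[OF D D] by simp
  qed
  finally show ?thesis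
    by simp
qed

lemma Sp_inverse_antiprincipal_block:
  assumes g: "g \<in> Sp n" and h: "h \<in> carrier_mat (2*n) (2*n)" and hg: "h * g = 1\<^sub>m (2*n)"
    and "k \<le> n"
  shows "mat k k (\<lambda>(i, j). h $$ (i, 2*n - 1 - j))
    = (-1) \<cdot>\<^sub>m mat k k (\<lambda>(i, j). (-1)^(i + j) * g $$ (j, 2*n - 1 - i))"
proof (rule eq_matI, goal_cases)
  case (1 i j)
  then have i: "i < k" and j: "j < k" by auto
  have "i + (2*n - 1 - j) = i + j + 1 + 2*(n - 1 - j)"
    using j \<open>k \<le> n\<close> by simp
  then have sign: "(-1::real)^(i + (2*n - 1 - j)) = - ((-1)^(i + j))"
    by (simp add: power_add power_mult)
  have "h $$ (i, 2*n - 1 - j) = - ((-1)^(i + j)) * g $$ (j, 2*n - 1 - i)"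
    using Sp_inverse_index[OF g h hg, of i "2*n - 1 - j"] i j \<open>k \<le> n\<close> sign by simp
  then show ?case
    using i j by simp
qed auto

theorem mainTheorem9:
  fixes n k :: nat and g h :: "real mat"
  assumes "1 \<le> n" and "1 \<le> k" and "k \<le> n"
    and "g \<in> Sp n"
    and "h \<in> carrier_mat (2*n) (2*n)" and "h * g = 1\<^sub>m (2*n)"
  shows "antiminor n k h = (-1)^k * antiminor n k g"
proof -
  define G where "G = mat k k (\<lambda>(i, j). g $$ (i, 2*n - 1 - j))"
  have G: "G \<in> carrier_mat k k"
    by (simp add: G_def)
  have "mat k k (\<lambda>(i, j). (-1)^(i + j) * g $$ (j, 2*n - 1 - i))
      = mat k k (\<lambda>(i, j). (-1)^(i + j) * transpose_mat G $$ (i, j))"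
    by (rule eq_matI) (auto simp: G_def)
  then have "det (mat k k (\<lambda>(i, j). (-1)^(i + j) * g $$ (j, 2*n - 1 - i))) = det G"
    using G by (simp add: det_checkerboard det_transpose)
  then show ?thesis
    unfolding antiminor_def Sp_inverse_antiprincipal_block[OF assms(4-6,3)] G_def[symmetric]
    by simp
qed

end
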